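(* Let $q$ be an odd prime power, $m\geq 2$, $n=\frac{q^m+1}{2}$, and suppose $q^m\equiv 1\pmod 4$. Let $i$ be an odd integer with $\frac{q^m-1}{2}-q^{m-1}<i<n$ of the form $i=\frac{q-3}{2}q^{m-1}+i_{m-2}q^{m-2}+\cdots+i_1q+i_0$, where $i_0,i_1,\ldots,i_{m-2}\in\{\frac{q-3}{2},\frac{q-1}{2},\frac{q+1}{2}\}$. Then $i$ is not a coset leader modulo $q^m+1$.
   Context: The $q$-cyclotomic coset of $i$ modulo $q^m+1$ is $\{i,iq,iq^2,\ldots\}\bmod(q^m+1)$; its smallest element is its coset leader, and $i$ is called a coset leader if it is the coset leader of its own coset. *)

theory Defs
  imports "HOL-Computational_Algebra.Primes"
begin

definition prime_power :: "nat \<Rightarrow> bool" where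
  "prime_power q \<longleftrightarrow> (\<exists>p k. prime p \<and> k \<ge> 1 \<and> q = p ^ k)"

definition cyc_coset :: "nat \<Rightarrow> nat \<Rightarrow> nat \<Rightarrow> nat set" where
  "cyc_coset q N i = {(i * q ^ j) mod N | j. True}"

definition is_coset_leader :: "nat \<Rightarrow> nat \<Rightarrow> nat \<Rightarrow> bool" where
  "is_coset_leader q N i \<longleftrightarrow> i = Min (cyc_coset q N i)"

end

theory Submission
  imports Defs
begin

(* Write i = n + v.  Since q^m = -1 and n q = n modulo q^m + 1, the element i q^s of the coset is
   n + v_s, where v_s is the value of the length-m window at position s of the negacyclic
   extension of the balanced base-q digit string of v, provided |v_s| < n.  The hypotheses make
   that string -1 followed by digits in {-1,0,1}, except that the last digit may be -2.
   If the last digit is -2, then either q = 3 and q divides i, or q >= 5 and the window starting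
   at that digit is smaller than v.  Otherwise all windows are small, so a coset leader has a
   lexicographically minimal window at 0; this forces the nonzero digits to alternate in sign,
   their sum is -1, and v is odd, whereas i and n are both odd. *)

(* Digits are indexed from the most significant one: a 0 is the coefficient of q^(m-1). *)
definition digit_value :: "int \<Rightarrow> nat \<Rightarrow> (nat \<Rightarrow> int) \<Rightarrow> int" where
  "digit_value q m a = (\<Sum>j<m. a j * q ^ (m - 1 - j))"

lemma digit_value_Suc:
  "digit_value q (Suc m) a = a 0 * q ^ m + digit_value q m (\<lambda>j. a (Suc j))"
  unfolding digit_value_def sum.lessThan_Suc_shift by simp

lemma digit_value_Suc_last:
  "digit_value q (Suc m) a = q * digit_value q m a + a m"
  unfolding digit_value_def sum.lessThan_Suc sum_distrib_left
  by (auto intro!: sum.cong simp: Suc_diff_Suc simp flip: power_Suc)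

lemma digit_value_diff:
  "digit_value q m b - digit_value q m a = digit_value q m (\<lambda>j. b j - a j)"
  by (simp add: digit_value_def sum_subtractf left_diff_distrib)

lemma digit_value_cong:
  "(\<And>j. j < m \<Longrightarrow> a j = b j) \<Longrightarrow> digit_value q m a = digit_value q m b"
  by (simp add: digit_value_def)

lemma digit_value_rev:
  "digit_value q m (\<lambda>j. e (m - 1 - j)) = (\<Sum>l<m. e l * q ^ l)"
  unfolding digit_value_def
  by (rule sum.reindex_bij_witness[where i="\<lambda>l. m - 1 - l" and j="\<lambda>j. m - 1 - j"]) auto

lemma abs_digit_value_le:
  assumes "q \<ge> 0" "\<And>j. j < m \<Longrightarrow> \<bar>a j\<bar> \<le> B"
  shows "\<bar>digit_value q m a\<bar> \<le> B * (\<Sum>l<m. q ^ l)"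
  using assms(2)
proof (induction m arbitrary: a)
  case 0
  then show ?case by (simp add: digit_value_def)
next
  case (Suc m)
  have "\<bar>a 0 * q ^ m\<bar> \<le> B * q ^ m"
    using Suc.prems[of 0] assms(1) by (simp add: abs_mult mult_right_mono)
  moreover have "\<bar>digit_value q m (\<lambda>j. a (Suc j))\<bar> \<le> B * (\<Sum>l<m. q ^ l)"
    using Suc by simp
  ultimately show ?case
    by (simp add: digit_value_Suc distrib_left abs_triangle_ineq[THEN order_trans])
qed

lemma digit_value_less_lex:
  assumes "q \<ge> 1" "p < m" "\<And>j. j < p \<Longrightarrow> a j = b j" "a p < b p"
    and "\<And>j. j < m \<Longrightarrow> \<bar>a j - b j\<bar> \<le> q - 1"
  shows "digit_value q m a < digit_value q m b"
  using assms(2-)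
proof (induction p arbitrary: m a b)
  case 0
  then obtain k where m: "m = Suc k" by (cases m) auto
  have "\<bar>digit_value q k (\<lambda>j. b (Suc j) - a (Suc j))\<bar> \<le> (q - 1) * (\<Sum>l<k. q ^ l)"
    using 0 m assms(1) by (intro abs_digit_value_le) (auto simp: abs_minus_commute)
  also have "\<dots> = q ^ k - 1" by (simp add: power_diff_1_eq)
  finally have "digit_value q k (\<lambda>j. b (Suc j)) - digit_value q k (\<lambda>j. a (Suc j)) > - (q ^ k)"
    by (simp add: digit_value_diff)
  moreover have "(a 0 + 1) * q ^ k \<le> b 0 * q ^ k"
    using 0 assms(1) by (intro mult_right_mono) auto
  ultimately show ?case by (simp add: m digit_value_Suc distrib_right)
next
  case (Suc p)
  then obtain k where m: "m = Suc k" by (cases m) auto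
  have "digit_value q k (\<lambda>j. a (Suc j)) < digit_value q k (\<lambda>j. b (Suc j))"
    using Suc m by (intro Suc.IH) auto
  then show ?case using Suc.prems(2)[of 0] by (simp add: m digit_value_Suc)
qed

lemma digit_value_parity:
  assumes "odd q"
  shows "even (digit_value q m a - (\<Sum>j<m. a j))"
proof -
  have "digit_value q m a - (\<Sum>j<m. a j) = (\<Sum>j<m. a j * (q ^ (m - 1 - j) - 1))"
    by (simp add: digit_value_def sum_subtractf algebra_simps)
  also have "even \<dots>" using assms by (intro dvd_sum) simp
  finally show ?thesis .
qed

definition negacyclic_ext :: "nat \<Rightarrow> (nat \<Rightarrow> int) \<Rightarrow> nat \<Rightarrow> int" where
  "negacyclic_ext m a t = (if even (t div m) then a (t mod m) else - a (t mod m))"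

lemma negacyclic_ext_add_period:
  "0 < m \<Longrightarrow> negacyclic_ext m a (t + m) = - negacyclic_ext m a t"
  by (simp add: negacyclic_ext_def div_add_self2)

lemma negacyclic_ext_less: "t < m \<Longrightarrow> negacyclic_ext m a t = a t"
  by (simp add: negacyclic_ext_def)

lemma negacyclic_ext_cases:
  "negacyclic_ext m a t = a (t mod m) \<or> negacyclic_ext m a t = - a (t mod m)"
  by (simp add: negacyclic_ext_def)

lemma negacyclic_ext_signed_digit:
  assumes "0 < m" "\<And>j. j < m \<Longrightarrow> a j \<in> {-1, 0, 1}"
  shows "negacyclic_ext m a t \<in> {-1, 0, 1}"
  using negacyclic_ext_cases[of m a t] assms(2)[of "t mod m"] assms(1) by auto

(* Multiplication by q modulo q^m + 1 moves the window one digit to the right. *)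
definition window :: "int \<Rightarrow> nat \<Rightarrow> (nat \<Rightarrow> int) \<Rightarrow> nat \<Rightarrow> int" where
  "window q m a s = digit_value q m (\<lambda>j. negacyclic_ext m a (s + j))"

lemma window_0: "window q m a 0 = digit_value q m a"
  unfolding window_def by (rule digit_value_cong) (simp add: negacyclic_ext_less)

lemma window_Suc:
  assumes "0 < m"
  shows "window q m a (Suc s) = q * window q m a s - negacyclic_ext m a s * (q ^ m + 1)"
proof -
  let ?c = "negacyclic_ext m a"
  obtain k where m: "m = Suc k" using assms by (cases m) auto
  define rest where "rest = digit_value q k (\<lambda>j. ?c (Suc s + j))"
  have "window q m a s = ?c s * q ^ k + rest"
    unfolding window_def m digit_value_Suc rest_def by simp
  moreover have "window q m a (Suc s) = q * rest + ?c (s + m)"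
    unfolding window_def m digit_value_Suc_last rest_def by (simp add: add.commute)
  ultimately show ?thesis
    using negacyclic_ext_add_period[OF assms, of a s] by (simp add: m algebra_simps)
qed

lemma window_cong:
  assumes "0 < m"
  shows "(q ^ m + 1) dvd (window q m a s - q ^ s * window q m a 0)"
proof (induction s)
  case 0
  then show ?case by simp
next
  case (Suc s)
  have "window q m a (Suc s) - q ^ Suc s * window q m a 0
        = q * (window q m a s - q ^ s * window q m a 0) - negacyclic_ext m a s * (q ^ m + 1)"
    by (simp add: window_Suc[OF assms] algebra_simps)
  then show ?case using Suc.IH by simp
qed

locale lexmin_negacyclic =
  fixes m g :: nat and c :: "nat \<Rightarrow> int"
  assumes negacyclic: "\<And>t. c (t + m) = - c t"
    and digits: "\<And>t. c t \<in> {-1, 0, 1}"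
    and start: "c 0 = -1"
    and first_nonzero: "0 < g" "g < m" "c g = 1" "\<And>j. 0 < j \<Longrightarrow> j < g \<Longrightarrow> c j = 0"
    and no_lex_descent:
      "\<And>s p. p < m \<Longrightarrow> (\<And>j. j < p \<Longrightarrow> c (s + j) = c j) \<Longrightarrow> c p \<le> c (s + p)"
begin

(* Otherwise the window at s would be lexicographically below the window at 0 at position min d g. *)
lemma next_nonzero_after_minus_one:
  assumes "c s = -1" "0 < d" "\<And>j. 0 < j \<Longrightarrow> j < d \<Longrightarrow> c (s + j) = 0" "c (s + d) \<noteq> 0"
  shows "c (s + d) = 1"
proof (rule ccontr)
  assume "c (s + d) \<noteq> 1"
  then have minus: "c (s + d) = -1" using digits[of "s + d"] assms(4) by auto
  have "c (min d g) \<le> c (s + min d g)"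
  proof (rule no_lex_descent)
    show "min d g < m" using first_nonzero(2) by simp
    show "c (s + j) = c j" if "j < min d g" for j
      using that assms(1,3) start first_nonzero(4) by (cases "j = 0") auto
  qed
  then show False
    using minus assms(3) first_nonzero(3,4) assms(2) first_nonzero(1)
    by (cases d g rule: linorder_cases) auto
qed

lemma nonzero_digits_alternate:
  assumes "c s \<noteq> 0" "0 < d" "\<And>j. 0 < j \<Longrightarrow> j < d \<Longrightarrow> c (s + j) = 0" "c (s + d) \<noteq> 0"
  shows "c (s + d) = - c s"
proof (cases "c s = -1")
  case True
  then show ?thesis using next_nonzero_after_minus_one assms by simp
next
  case False
  then have "c s = 1" using digits[of s] assms(1) by auto
  have "c ((s + m) + d) = 1"
  proof (rule next_nonzero_after_minus_one)
    show "c (s + m) = -1" using negacyclic[of s] \<open>c s = 1\<close> by simp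
    show "c (s + m + j) = 0" if "0 < j" "j < d" for j
      using negacyclic[of "s + j"] assms(3)[OF that] by (simp add: ac_simps)
    show "c (s + m + d) \<noteq> 0" using negacyclic[of "s + d"] assms(4) by (simp add: ac_simps)
  qed fact
  then show ?thesis using negacyclic[of "s + d"] \<open>c s = 1\<close> by (simp add: ac_simps)
qed

lemma sum_before_nonzero: "c t \<noteq> 0 \<Longrightarrow> (\<Sum>j<t. c j) = - ((1 + c t) div 2)"
proof (induction t rule: less_induct)
  case (less t)
  show ?case
  proof (cases "t = 0")
    case True
    then show ?thesis using start by simp
  next
    case False
    define s where "s = Max {j. j < t \<and> c j \<noteq> 0}"
    have fin: "finite {j. j < t \<and> c j \<noteq> 0}" by simp
    have "s \<in> {j. j < t \<and> c j \<noteq> 0}"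
      unfolding s_def using False start by (intro Max_in fin) auto
    then have s: "s < t" "c s \<noteq> 0" by auto
    have gap: "c j = 0" if "s < j" "j < t" for j
      using that Max_ge[OF fin] linorder_not_less unfolding s_def by blast
    have "c (s + (t - s)) = - c s"
      by (rule nonzero_digits_alternate) (use s gap less.prems in auto)
    then have ct: "c t = - c s" using s by simp
    have "(\<Sum>j<t. c j) = (\<Sum>j<Suc s. c j)"
      by (rule sum.mono_neutral_right) (use s gap in auto)
    also have "\<dots> = - ((1 + c s) div 2) + c s" using less.IH[OF s] by simp
    finally show ?thesis using ct digits[of s] s(2) by auto
  qed
qed

lemma period_sum: "(\<Sum>t<m. c t) = -1"
  using sum_before_nonzero[of m] negacyclic[of 0] start by simp

end

lemma coset_leader_le_mult:
  assumes "is_coset_leader q N i" "0 < N"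
  shows "i \<le> i * q ^ s mod N"
proof -
  have "finite (cyc_coset q N i)"
    by (rule finite_subset[of _ "{..<N}"]) (auto simp: cyc_coset_def assms(2))
  moreover have "i * q ^ s mod N \<in> cyc_coset q N i" unfolding cyc_coset_def by blast
  ultimately have "Min (cyc_coset q N i) \<le> i * q ^ s mod N" by simp
  then show ?thesis using assms(1) unfolding is_coset_leader_def by simp
qed

lemma not_coset_leader_if_dvd:
  fixes q m i :: nat
  assumes "q \<ge> 2" "m \<ge> 1" "0 < i" "i < q ^ m + 1" "q dvd i"
  shows "\<not> is_coset_leader q (q ^ m + 1) i"
proof
  assume lead: "is_coset_leader q (q ^ m + 1) i"
  obtain i' where i': "i = q * i'" using assms(5) by blast
  have smaller: "i' < i" using i' assms(1,3) by simp
  have "q ^ (2 * m) = (q ^ m - 1) * (q ^ m + 1) + 1"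
    using assms(1) by (simp add: power_mult_distrib algebra_simps flip: power_add mult_2)
  then have "q ^ (2 * m) mod (q ^ m + 1) = 1 mod (q ^ m + 1)" by (simp only: mod_mult_self3)
  then have "q ^ (2 * m) mod (q ^ m + 1) = 1" using assms(1,2) by simp
  moreover have "i * q ^ (2 * m - 1) = i' * q ^ (2 * m)"
    using assms(2) by (simp add: i' power_eq_if[of q "2 * m"])
  ultimately have "i * q ^ (2 * m - 1) mod (q ^ m + 1) = i' mod (q ^ m + 1)"
    by (metis mod_mult_right_eq mult.right_neutral)
  also have "\<dots> = i'" using smaller assms(4) by simp
  finally show False using coset_leader_le_mult[OF lead, of "2 * m - 1"] smaller by simp
qed

lemma window_in_coset:
  fixes q n i :: nat
  assumes "odd q" "0 < m" "2 * n = q ^ m + 1"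
    and "int i = int n + window (int q) m a 0" "\<bar>window (int q) m a s\<bar> < int n"
  shows "int (i * q ^ s mod (q ^ m + 1)) = int n + window (int q) m a s"
proof -
  let ?N = "int q ^ m + 1" and ?W = "window (int q) m a"
  have N: "?N = 2 * int n" using arg_cong[OF assms(3), of int] by simp
  have "even (int q ^ s - 1)" using assms(1) by simp
  then have "?N dvd int n * (int q ^ s - 1)" unfolding N by (auto intro: mult_dvd_mono)
  moreover have "?N dvd ?W s - int q ^ s * ?W 0" by (rule window_cong[OF assms(2)])
  ultimately have "?N dvd int n * (int q ^ s - 1) - (?W s - int q ^ s * ?W 0)" by (rule dvd_diff)
  also have "int n * (int q ^ s - 1) - (?W s - int q ^ s * ?W 0) = int i * int q ^ s - (int n + ?W s)"
    using assms(4) by (simp add: algebra_simps)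
  finally have "(int i * int q ^ s) mod ?N = (int n + ?W s) mod ?N"
    by (simp add: mod_eq_dvd_iff)
  also have "\<dots> = int n + ?W s" using assms(5) N by simp
  finally show ?thesis by (simp add: of_nat_mod add.commute)
qed

lemma coset_leader_window_le:
  fixes q n i :: nat
  assumes "is_coset_leader q (q ^ m + 1) i"
    and "odd q" "0 < m" "2 * n = q ^ m + 1"
    and "int i = int n + window (int q) m a 0" "\<bar>window (int q) m a s\<bar> < int n"
  shows "window (int q) m a 0 \<le> window (int q) m a s"
  using coset_leader_le_mult[OF assms(1), of s] window_in_coset[OF assms(2-)] assms(5)
  by linarith

lemma first_nonzero_digit_is_one:
  assumes "q \<ge> 2" "0 < m" "a 0 = -1" "\<And>j. j < m \<Longrightarrow> \<bar>a j\<bar> \<le> 1"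
    and "- (q ^ (m - 1)) < digit_value q m a"
  obtains g where "0 < g" "g < m" "a g = 1" "\<And>j. 0 < j \<Longrightarrow> j < g \<Longrightarrow> a j = 0"
proof -
  define b :: "nat \<Rightarrow> int" where "b j = (if j = 0 then -1 else 0)" for j
  obtain k where m: "m = Suc k" using assms(2) by (cases m) auto
  have value_b: "digit_value q m b = - (q ^ (m - 1))"
    unfolding m digit_value_Suc by (simp add: b_def digit_value_def)
  have "\<exists>j. 0 < j \<and> j < m \<and> a j \<noteq> 0"
  proof (rule ccontr)
    assume "\<not> ?thesis"
    then have "digit_value q m a = digit_value q m b"
      using assms(3) by (intro digit_value_cong) (auto simp: b_def)
    then show False using assms(5) value_b by simp
  qed
  then obtain j0 where j0: "0 < j0" "j0 < m" "a j0 \<noteq> 0" by blast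
  define g where "g = (LEAST j. 0 < j \<and> a j \<noteq> 0)"
  have g: "0 < g" "a g \<noteq> 0" "g \<le> j0"
    using LeastI[of "\<lambda>j. 0 < j \<and> a j \<noteq> 0" j0] Least_le[of "\<lambda>j. 0 < j \<and> a j \<noteq> 0" j0] j0
    unfolding g_def by auto
  have before_g: "a j = 0" if "0 < j" "j < g" for j
    using not_less_Least[of j "\<lambda>j. 0 < j \<and> a j \<noteq> 0"] that unfolding g_def by auto
  have "a g \<noteq> -1"
  proof
    assume "a g = -1"
    have "digit_value q m a < digit_value q m b"
    proof (rule digit_value_less_lex[where p = g])
      show "\<bar>a j - b j\<bar> \<le> q - 1" if "j < m" for j
        using assms(1,3) assms(4)[OF that] by (auto simp: b_def)
    qed (use assms(1,3) g j0 before_g \<open>a g = -1\<close> in \<open>auto simp: b_def\<close>)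
    then show False using assms(5) value_b by simp
  qed
  then have "a g = 1" using assms(4)[of g] g j0 by auto
  then show ?thesis using g j0 before_g by (intro that[of g]) auto
qed

lemma abs_window_less_half:
  fixes q h :: int
  assumes "q \<ge> 3" "0 < m" "2 * h = q ^ m + 1" "\<And>j. j < m \<Longrightarrow> a j \<in> {-1, 0, 1}"
  shows "\<bar>window q m a s\<bar> < h"
proof -
  have "\<bar>negacyclic_ext m a t\<bar> \<le> 1" for t
    using negacyclic_ext_signed_digit[of m a t] assms(2,4) by fastforce
  then have "\<bar>window q m a s\<bar> \<le> 1 * (\<Sum>l<m. q ^ l)"
    unfolding window_def using assms(1) by (intro abs_digit_value_le) auto
  moreover have "2 * (\<Sum>l<m. q ^ l) \<le> (q - 1) * (\<Sum>l<m. q ^ l)"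
    using assms(1) by (intro mult_right_mono sum_nonneg) auto
  ultimately show ?thesis using assms(3) power_diff_1_eq[of q m] by linarith
qed

lemma odd_digit_value_if_windows_ge:
  fixes q h :: int
  assumes "q \<ge> 3" "0 < m" "2 * h = q ^ m + 1"
    and digits: "\<And>j. j < m \<Longrightarrow> a j \<in> {-1, 0, 1}" and "a 0 = -1"
    and "- (q ^ (m - 1)) < digit_value q m a"
    and windows_ge: "\<And>s. \<bar>window q m a s\<bar> < h \<Longrightarrow> digit_value q m a \<le> window q m a s"
  shows "odd (digit_value q m a)"
proof -
  let ?c = "negacyclic_ext m a"
  have c_digits: "?c t \<in> {-1, 0, 1}" for t
    using negacyclic_ext_signed_digit assms(2) digits by blast
  have ge: "window q m a 0 \<le> window q m a s" for s
    using windows_ge[OF abs_window_less_half[OF assms(1-3) digits]] by (simp add: window_0)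
  have "\<bar>a j\<bar> \<le> 1" if "j < m" for j using digits[OF that] by auto
  then obtain g where g: "0 < g" "g < m" "a g = 1" "\<And>j. 0 < j \<Longrightarrow> j < g \<Longrightarrow> a j = 0"
    using first_nonzero_digit_is_one[of q m a] assms(1,2,5,6) by auto
  interpret lexmin_negacyclic m g ?c
  proof
    show "?c t \<in> {-1, 0, 1}" for t by (rule c_digits)
    show "0 < g" "g < m" by (rule g(1), rule g(2))
    show "?c (t + m) = - ?c t" for t by (rule negacyclic_ext_add_period[OF assms(2)])
    show "?c 0 = -1" "?c g = 1" "\<And>j. 0 < j \<Longrightarrow> j < g \<Longrightarrow> ?c j = 0"
      using assms(2,5) g by (simp_all add: negacyclic_ext_less)
    show "?c p \<le> ?c (s + p)" if "p < m" "\<And>j. j < p \<Longrightarrow> ?c (s + j) = ?c j" for s p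
    proof (rule ccontr)
      assume descent: "\<not> ?c p \<le> ?c (s + p)"
      have "window q m a s < window q m a 0"
        unfolding window_def
      proof (rule digit_value_less_lex[where p = p])
        show "\<bar>?c (s + j) - ?c (0 + j)\<bar> \<le> q - 1" for j
          using c_digits[of "s + j"] c_digits[of j] assms(1) by auto
      qed (use that descent assms(1) in auto)
      then show False using ge[of s] by simp
    qed
  qed
  have "(\<Sum>j<m. a j) = -1" using period_sum by (simp add: negacyclic_ext_less)
  moreover have "odd q"
    using assms(2,3) by (metis even_add even_power dvd_triv_left odd_one)
  ultimately show ?thesis using digit_value_parity[of q m a] by simp
qed

lemma window_at_last_digit:
  fixes q h :: int
  assumes "q \<ge> 5" "0 < m" "2 * h = q ^ m + 1"
    and "a (m - 1) = -2" "\<And>j. j < m - 1 \<Longrightarrow> \<bar>a j\<bar> \<le> 1"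
  shows "\<bar>window q m a (m - 1)\<bar> < h" "window q m a (m - 1) < - (q ^ (m - 1))"
proof -
  let ?c = "negacyclic_ext m a"
  obtain k where m: "m = Suc k" using assms(2) by (cases m) auto
  define T where "T = digit_value q k (\<lambda>j. ?c (Suc k + j))"
  define G where "G = (\<Sum>l<k. q ^ l)"
  have W: "window q m a k = -2 * q ^ k + T"
    using assms(4) unfolding window_def m digit_value_Suc T_def by (simp add: negacyclic_ext_less)
  have "\<bar>T\<bar> \<le> 1 * G"
    unfolding T_def G_def
  proof (rule abs_digit_value_le)
    show "\<bar>?c (Suc k + j)\<bar> \<le> 1" if "j < k" for j
      using negacyclic_ext_add_period[OF assms(2), of a j] assms(5)[of j] that
      by (simp add: m negacyclic_ext_less add.commute)
  qed (use assms(1) in simp)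
  moreover have "4 * G \<le> q ^ k - 1"
    using power_diff_1_eq[of q k] assms(1) mult_right_mono[of 4 "q - 1" G]
    by (simp add: G_def sum_nonneg)
  moreover have "5 * q ^ k \<le> q ^ m"
    using assms(1) by (simp add: m mult_right_mono)
  ultimately show "\<bar>window q m a (m - 1)\<bar> < h" "window q m a (m - 1) < - (q ^ (m - 1))"
    using W assms(3) by (simp_all add: m)
qed

lemma prime_power_ge_2: "prime_power q \<Longrightarrow> q \<ge> 2"
  unfolding prime_power_def
proof (elim exE conjE)
  fix p k assume "prime p" "k \<ge> 1" "q = p ^ k"
  then show "q \<ge> 2" using prime_ge_2_nat[of p] self_le_power[of p k] by simp
qed

(* The base-q digits of n - 1 are all (q - 1)/2, so i - n has balanced digits d_j - (q - 1)/2,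
   except that the least significant one absorbs the extra -1. *)
lemma balanced_digits_representation:
  fixes q m n i :: nat and d :: "nat \<Rightarrow> nat"
  assumes "odd q" "q \<ge> 3" "m \<ge> 2" "2 * n = q ^ m + 1"
    and "i = ((q - 3) div 2) * q ^ (m - 1) + (\<Sum>j<m - 1. d j * q ^ j)"
    and "\<forall>j<m - 1. d j \<in> {(q - 3) div 2, (q - 1) div 2, (q + 1) div 2}"
  obtains a where "int i = int n + digit_value (int q) m a" "a 0 = -1"
    "\<And>j. j < m - 1 \<Longrightarrow> a j \<in> {-1, 0, 1}"
    "d 0 = (q - 3) div 2 \<Longrightarrow> a (m - 1) = -2"
    "d 0 \<noteq> (q - 3) div 2 \<Longrightarrow> a (m - 1) \<in> {-1, 0}"
proof -
  obtain r where q: "q = 2 * r + 1" using assms(1) oddE by blast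
  have r: "r \<ge> 1" using assms(2) q by simp
  have halves: "(q - 3) div 2 = r - 1" "(q - 1) div 2 = r" "(q + 1) div 2 = r + 1"
    using q by auto
  obtain k where m: "m = Suc k" and k: "k \<ge> 1" using assms(3) by (cases m) auto
  let ?Q = "int q"
  define e where "e l = (if l = k then -1 else int (d l) - int r) - (if l = 0 then 1 else 0)" for l
  define D where "D = (\<Sum>l<k. int (d l) * ?Q ^ l)"
  define G where "G = (\<Sum>l<k. ?Q ^ l)"
  have "(\<Sum>l<k. e l * ?Q ^ l) = (\<Sum>l<k. (int (d l) - int r) * ?Q ^ l - (if l = 0 then 1 else 0))"
    by (rule sum.cong) (auto simp: e_def)
  also have "\<dots> = D - int r * G - 1"
    using k by (simp add: D_def G_def sum_subtractf sum_distrib_left left_diff_distrib sum.delta)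
  finally have "digit_value ?Q m (\<lambda>j. e (m - 1 - j)) = D - int r * G - 1 - ?Q ^ k"
    unfolding digit_value_rev using k by (simp add: m e_def)
  moreover have "int i = (int r - 1) * ?Q ^ k + D"
    using assms(5) r by (simp add: halves m D_def of_nat_diff)
  moreover have "2 * int n = (2 * int r + 1) * ?Q ^ k + 1"
    using arg_cong[OF assms(4), of int] by (simp add: q m algebra_simps)
  moreover have "2 * int r * G = ?Q ^ k - 1"
    using power_diff_1_eq[of ?Q k] by (simp add: q G_def)
  ultimately have "int i = int n + digit_value ?Q m (\<lambda>j. e (m - 1 - j))"
    by (simp add: algebra_simps)
  moreover have "e (m - 1 - j) \<in> {-1, 0, 1}" if "j < m - 1" for j
  proof (cases "j = 0")
    case False
    then have "d (k - j) \<in> {r - 1, r, r + 1}" using assms(6) that halves m by auto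
    then show ?thesis using False that r by (auto simp: e_def m)
  qed (use k in \<open>simp add: e_def m\<close>)
  moreover have "d 0 \<in> {r - 1, r, r + 1}" using assms(6) k halves m by auto
  then have "d 0 = (q - 3) div 2 \<Longrightarrow> e 0 = -2" "d 0 \<noteq> (q - 3) div 2 \<Longrightarrow> e 0 \<in> {-1, 0}"
    using k r by (auto simp: e_def halves)
  moreover have "e k = -1" using k by (simp add: e_def)
  ultimately show ?thesis by (intro that[of "\<lambda>j. e (m - 1 - j)"]) (simp_all add: m)
qed

lemma balanced_value_gt:
  fixes q m n i :: nat and v :: int
  assumes "q \<ge> 3" "m \<ge> 1" "2 * n = q ^ m + 1"
    and "(q ^ m - 1) div 2 - q ^ (m - 1) < i" "int i = int n + v"
    and "odd q" "even v"
  shows "- (int q ^ (m - 1)) < v"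
proof -
  have "q ^ m = q * q ^ (m - 1)" using assms(2) by (simp flip: power_Suc)
  then have "3 * q ^ (m - 1) \<le> q ^ m" using assms(1) by simp
  moreover have "(q ^ m - 1) div 2 = n - 1" using assms(3) by presburger
  ultimately have "q ^ (m - 1) \<le> n - 1" "n - 1 - q ^ (m - 1) < i"
    using assms(3,4) by linarith+
  then have "int n - 1 - int q ^ (m - 1) < int i"
    using of_nat_power[of q "m - 1", where 'a = int] by arith
  then have "- (int q ^ (m - 1)) \<le> v" using assms(5) by simp
  moreover have "odd (int q ^ (m - 1))" using assms(6) by simp
  ultimately show ?thesis using assms(7) by (metis order_le_less even_minus)
qed

theorem lemma29:
  fixes q m i :: nat and d :: "nat \<Rightarrow> nat"
  assumes "prime_power q" and "odd q" and "m \<ge> 2"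
    and "n = (q ^ m + 1) div 2"
    and "q ^ m mod 4 = 1"
    and "odd i"
    and "(q ^ m - 1) div 2 - q ^ (m - 1) < i" and "i < n"
    and "i = ((q - 3) div 2) * q ^ (m - 1) + (\<Sum>j<m - 1. d j * q ^ j)"
    and "\<forall>j<m - 1. d j \<in> {(q - 3) div 2, (q - 1) div 2, (q + 1) div 2}"
  shows "\<not> is_coset_leader q (q ^ m + 1) i"
proof
  assume lead: "is_coset_leader q (q ^ m + 1) i"
  have q3: "q \<ge> 3" using prime_power_ge_2[OF assms(1)] assms(2) by presburger
  have n: "2 * n = q ^ m + 1" "odd n" using assms(4,5) by presburger+
  have n_int: "2 * int n = int q ^ m + 1" using arg_cong[OF n(1), of int] by simp
  obtain a where val: "int i = int n + digit_value (int q) m a" and "a 0 = -1"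
    and mid: "\<And>j. j < m - 1 \<Longrightarrow> a j \<in> {-1, 0, 1}"
    and last: "d 0 = (q - 3) div 2 \<Longrightarrow> a (m - 1) = -2"
      "d 0 \<noteq> (q - 3) div 2 \<Longrightarrow> a (m - 1) \<in> {-1, 0}"
    using balanced_digits_representation[OF assms(2) q3 assms(3) n(1) assms(9,10)] by blast
  have even: "even (digit_value (int q) m a)" using val n(2) assms(6) by presburger
  have above: "- (int q ^ (m - 1)) < digit_value (int q) m a"
    using balanced_value_gt[OF q3 _ n(1) assms(7) val assms(2) even] assms(3) by simp
  have windows_ge: "digit_value (int q) m a \<le> window (int q) m a s"
    if "\<bar>window (int q) m a s\<bar> < int n" for s
    using coset_leader_window_le[OF lead assms(2) _ n(1) _ that] val assms(3) by (simp add: window_0)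
  show False
  proof (cases "d 0 = (q - 3) div 2")
    case False
    then have "a j \<in> {-1, 0, 1}" if "j < m" for j
      using mid[of j] last(2) that by (cases "j = m - 1") auto
    then have "odd (digit_value (int q) m a)"
      using q3 assms(3) n_int \<open>a 0 = -1\<close> above windows_ge
      by (intro odd_digit_value_if_windows_ge[of "int q" m "int n" a]) auto
    then show False using even by simp
  next
    case d0: True
    show False
    proof (cases "q = 3")
      case True
      have "q dvd d j * q ^ j" for j
        using d0 True by (cases "j = 0") (simp_all add: dvd_power)
      then have "q dvd i" using assms(9) True by (simp add: dvd_sum)
      then show False
        using not_coset_leader_if_dvd[of q m i] lead q3 assms(3,6,8) n(1) by (simp add: odd_pos)
    next
      case False
      then have "int q \<ge> 5" using q3 assms(2) by presburger
      moreover have "\<bar>a j\<bar> \<le> 1" if "j < m - 1" for j using mid[OF that] by auto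
      ultimately have "\<bar>window (int q) m a (m - 1)\<bar> < int n"
        "window (int q) m a (m - 1) < - (int q ^ (m - 1))"
        using window_at_last_digit[of "int q" m "int n" a] last(1)[OF d0] assms(3) n_int by auto
      then show False using windows_ge above by fastforce
    qed
  qed
qed

end
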